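(* Let $R$ be a $*$-ring and let $R[i]=\{a+bi \mid a,b\in R\}$, where $i$ commutes with every element of $R$ and $i^2=-1$, equipped with the involution $(a+bi)^*=a^*+b^*i$. Then $R[i]$ is strongly $J$-$*$-clean if and only if $R$ is strongly $J$-$*$-clean.
   Context: All rings are associative with identity. A $*$-ring is a ring $R$ with an involution $*$, i.e. a map $a\mapsto a^*$ with $(a+b)^*=a^*+b^*$, $(ab)^*=b^*a^*$, $(a^* )^*=a$. $J(R)$ denotes the Jacobson radical of $R$. A projection is an element $e$ with $e^2=e=e^*$. A $*$-ring $R$ is strongly $J$-$*$-clean if every $a\in R$ can be written $a=e+u$ with $e$ a projection, $u\in J(R)$ and $ae=ea$. *)

theory Defs
  imports Main
begin

definition is_involution :: "('a::ring_1 \<Rightarrow> 'a) \<Rightarrow> bool" where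
  "is_involution st \<longleftrightarrow>
     (\<forall>a b. st (a + b) = st a + st b) \<and>
     (\<forall>a b. st (a * b) = st b * st a) \<and>
     (\<forall>a. st (st a) = a)"

definition left_ideal :: "'a::ring_1 set \<Rightarrow> bool" where
  "left_ideal I \<longleftrightarrow> 0 \<in> I \<and> (\<forall>x\<in>I. \<forall>y\<in>I. x + y \<in> I) \<and> (\<forall>x\<in>I. - x \<in> I)
     \<and> (\<forall>r. \<forall>x\<in>I. r * x \<in> I)"

definition maximal_left_ideal :: "'a::ring_1 set \<Rightarrow> bool" where
  "maximal_left_ideal I \<longleftrightarrow> left_ideal I \<and> I \<noteq> UNIV \<and>
     (\<forall>K. left_ideal K \<and> I \<subseteq> K \<longrightarrow> K = I \<or> K = UNIV)"

definition jacobson :: "'a::ring_1 set" where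
  "jacobson = \<Inter> {I. maximal_left_ideal I}"

definition projection :: "('a::ring_1 \<Rightarrow> 'a) \<Rightarrow> 'a \<Rightarrow> bool" where
  "projection st e \<longleftrightarrow> e * e = e \<and> st e = e"

definition strongly_J_star_clean :: "('a::ring_1 \<Rightarrow> 'a) \<Rightarrow> bool" where
  "strongly_J_star_clean st \<longleftrightarrow>
     (\<forall>a. \<exists>e u. projection st e \<and> u \<in> jacobson \<and> a = e + u \<and> a * e = e * a)"

datatype 'a gi = GI (re: 'a) (im: 'a)

instantiation gi :: (ring_1) ring_1
begin
definition "0 = GI 0 0"
definition "1 = GI 1 0"
definition "x + y = GI (re x + re y) (im x + im y)"
definition "x - y = GI (re x - re y) (im x - im y)"
definition "- x = GI (- re x) (- im x)"
definition "x * y = GI (re x * re y - im x * im y) (re x * im y + im x * re y)"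
instance
proof
  fix a b c :: "'a gi"
  show "a * b * c = a * (b * c)"
    by (simp add: times_gi_def algebra_simps)
  show "(a + b) * c = a * c + b * c"
    by (simp add: times_gi_def plus_gi_def algebra_simps)
  show "a * (b + c) = a * b + a * c"
    by (simp add: times_gi_def plus_gi_def algebra_simps)
  show "a + b + c = a + (b + c)" by (simp add: plus_gi_def algebra_simps)
  show "a + b = b + a" by (simp add: plus_gi_def algebra_simps)
  show "0 + a = a" by (simp add: plus_gi_def zero_gi_def)
  show "- a + a = 0" by (simp add: plus_gi_def zero_gi_def uminus_gi_def)
  show "a - b = a + - b" by (simp add: plus_gi_def minus_gi_def uminus_gi_def)
  show "1 * a = a" by (simp add: times_gi_def one_gi_def)
  show "a * 1 = a" by (simp add: times_gi_def one_gi_def)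
  show "(0::'a gi) \<noteq> 1" by (simp add: zero_gi_def one_gi_def)
qed
end

definition gi_i :: "'a::ring_1 gi" where "gi_i = GI 0 1"

definition gi_star :: "('a::ring_1 \<Rightarrow> 'a) \<Rightarrow> 'a gi \<Rightarrow> 'a gi" where
  "gi_star st x = GI (st (re x)) (st (im x))"

end

theory Submission
  imports Defs
begin

text \<open>
  Three facts about a strongly J-*-clean ring drive the proof. Two commuting idempotents whose
  difference lies in \<open>J\<close> coincide, so every idempotent equals the projection of its own
  decomposition; once all idempotents are self-adjoint they are central, because
  \<open>e + e x (1 - e)\<close> is again idempotent; and decomposing \<open>-1\<close> shows \<open>2 \<in> J\<close>.

  If \<open>R[i]\<close> is strongly J-*-clean, decompose \<open>a \<in> R\<close> in \<open>R[i]\<close> as \<open>e + u\<close>. Conjugation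
  \<open>a + bi \<mapsto> a - bi\<close> is a ring automorphism fixing \<open>a\<close>, so \<open>cnj e\<close> is an idempotent commuting
  with \<open>e\<close> and \<open>e - cnj e = cnj u - u \<in> J\<close>; hence \<open>e = cnj e\<close>, and writing \<open>e = p + qi\<close> this gives
  \<open>2q = 0\<close> while centrality gives \<open>q = 2pq\<close>, so \<open>e = p \<in> R\<close>.

  Conversely \<open>i - 1\<close> is central with \<open>(i - 1)\<^sup>2 = -2i \<in> J\<close>, so \<open>i - 1 \<in> J\<close>, and
  \<open>a + bi = (a + b) + b(i - 1)\<close> turns a decomposition of \<open>a + b\<close> in \<open>R\<close> into one of \<open>a + bi\<close>.
\<close>

section \<open>Left ideals and the Jacobson radical\<close>

lemma left_idealI:
  assumes "0 \<in> I" and "\<And>x y. x \<in> I \<Longrightarrow> y \<in> I \<Longrightarrow> x + y \<in> I"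
    and "\<And>x. x \<in> I \<Longrightarrow> - x \<in> I" and "\<And>r x. x \<in> I \<Longrightarrow> r * x \<in> I"
  shows "left_ideal (I::'a::ring_1 set)"
  using assms unfolding left_ideal_def by blast

lemma left_idealD:
  assumes "left_ideal (I::'a::ring_1 set)"
  shows "0 \<in> I" and "x \<in> I \<Longrightarrow> y \<in> I \<Longrightarrow> x + y \<in> I"
    and "x \<in> I \<Longrightarrow> - x \<in> I" and "x \<in> I \<Longrightarrow> r * x \<in> I"
  using assms unfolding left_ideal_def by blast+

lemma left_ideal_one_imp_UNIV:
  assumes "left_ideal (K::'a::ring_1 set)" and "1 \<in> K"
  shows "K = UNIV"
proof -
  have "r * 1 \<in> K" for r using left_idealD(4)[OF assms] .
  then show ?thesis by auto
qed

lemma left_ideal_Union_chain: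
  fixes C :: "'a::ring_1 set set"
  assumes "C \<noteq> {}" and ideals: "\<And>K. K \<in> C \<Longrightarrow> left_ideal K" and "chain\<^sub>\<subseteq> C"
  shows "left_ideal (\<Union>C)"
proof (rule left_idealI)
  show "0 \<in> \<Union>C" using assms(1) left_idealD(1)[OF ideals] by blast
next
  fix x y assume "x \<in> \<Union>C" "y \<in> \<Union>C"
  then obtain A B where AB: "A \<in> C" "B \<in> C" "x \<in> A" "y \<in> B" by blast
  with \<open>chain\<^sub>\<subseteq> C\<close> have "A \<subseteq> B \<or> B \<subseteq> A" unfolding chain_subset_def by blast
  with AB left_idealD(2)[OF ideals] show "x + y \<in> \<Union>C" by blast
next
  fix r x assume "x \<in> \<Union>C"
  with left_idealD(3,4)[OF ideals] show "- x \<in> \<Union>C" and "r * x \<in> \<Union>C" by blast+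
qed

lemma exists_maximal_left_ideal:
  fixes I :: "'a::ring_1 set"
  assumes "left_ideal I" and "1 \<notin> I"
  obtains M where "maximal_left_ideal M" and "I \<subseteq> M"
proof -
  define S where "S = {K. left_ideal K \<and> I \<subseteq> K \<and> 1 \<notin> K}"
  have "\<forall>C\<in>chains S. \<exists>U\<in>S. \<forall>X\<in>C. X \<subseteq> U"
  proof
    fix C assume C: "C \<in> chains S"
    show "\<exists>U\<in>S. \<forall>X\<in>C. X \<subseteq> U"
    proof (cases "C = {}")
      case True
      then show ?thesis using assms unfolding S_def by blast
    next
      case False
      have "C \<subseteq> S" and "chain\<^sub>\<subseteq> C" using C unfolding chains_def by auto
      then have "left_ideal (\<Union>C)"
        using left_ideal_Union_chain[OF False] unfolding S_def by blast
      with False \<open>C \<subseteq> S\<close> have "\<Union>C \<in> S" unfolding S_def by blast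
      then show ?thesis by blast
    qed
  qed
  from Zorn_Lemma2[OF this] obtain M
    where M: "M \<in> S" and M_max: "\<And>X. X \<in> S \<Longrightarrow> M \<subseteq> X \<Longrightarrow> X = M"
    by blast
  have "left_ideal M" "I \<subseteq> M" "1 \<notin> M" using M unfolding S_def by auto
  moreover have "K = M \<or> K = UNIV" if "left_ideal K" "M \<subseteq> K" for K
  proof (cases "1 \<in> K")
    case True
    then show ?thesis using left_ideal_one_imp_UNIV that(1) by blast
  next
    case False
    with that \<open>I \<subseteq> M\<close> have "K \<in> S" unfolding S_def by blast
    then show ?thesis using M_max that(2) by blast
  qed
  ultimately have "maximal_left_ideal M"
    unfolding maximal_left_ideal_def by blast
  then show thesis using \<open>I \<subseteq> M\<close> by (rule that)
qed

lemma left_ideal_jacobson: "left_ideal (jacobson::'a::ring_1 set)"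
proof -
  have "left_ideal M" if "M \<in> {I. maximal_left_ideal I}" for M :: "'a set"
    using that by (simp add: maximal_left_ideal_def)
  then show ?thesis
    unfolding jacobson_def left_ideal_def by (simp add: Inter_iff)
qed

lemma zero_in_jacobson: "(0::'a::ring_1) \<in> jacobson"
  by (rule left_idealD(1)[OF left_ideal_jacobson])

lemma jacobson_add: "x \<in> jacobson \<Longrightarrow> y \<in> jacobson \<Longrightarrow> (x::'a::ring_1) + y \<in> jacobson"
  by (rule left_idealD(2)[OF left_ideal_jacobson])

lemma jacobson_uminus: "x \<in> jacobson \<Longrightarrow> - (x::'a::ring_1) \<in> jacobson"
  by (rule left_idealD(3)[OF left_ideal_jacobson])

lemma jacobson_mult_left: "x \<in> jacobson \<Longrightarrow> r * (x::'a::ring_1) \<in> jacobson"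
  by (rule left_idealD(4)[OF left_ideal_jacobson])

lemma jacobson_diff: "x \<in> jacobson \<Longrightarrow> y \<in> jacobson \<Longrightarrow> (x::'a::ring_1) - y \<in> jacobson"
  using jacobson_add[of x "- y"] jacobson_uminus[of y] by simp

lemma left_ideal_range_mult_right: "left_ideal (range (\<lambda>s. s * (y::'a::ring_1)))"
proof (rule left_idealI)
  show "0 \<in> range (\<lambda>s. s * y)" using rangeI[of "\<lambda>s. s * y" 0] by simp
next
  fix a b assume "a \<in> range (\<lambda>s. s * y)" "b \<in> range (\<lambda>s. s * y)"
  then obtain s t where "a = s * y" "b = t * y" by blast
  then have "a + b = (s + t) * y" by (simp add: distrib_right)
  then show "a + b \<in> range (\<lambda>s. s * y)" by blast
next
  fix r a assume "a \<in> range (\<lambda>s. s * y)"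
  then obtain s where "a = s * y" by blast
  then have "- a = (- s) * y" and "r * a = (r * s) * y" by (simp_all add: mult.assoc)
  then show "- a \<in> range (\<lambda>s. s * y)" and "r * a \<in> range (\<lambda>s. s * y)" by blast+
qed

lemma left_ideal_add_left_multiples:
  assumes M: "left_ideal (M::'a::ring_1 set)"
  shows "left_ideal {m + r * x | m r. m \<in> M}" (is "left_ideal ?K")
proof (rule left_idealI)
  have "0 = 0 + 0 * x" by simp
  then show "0 \<in> ?K" using left_idealD(1)[OF M] by blast
next
  fix a b assume "a \<in> ?K" "b \<in> ?K"
  then obtain m r n t where "m \<in> M" "n \<in> M" "a = m + r * x" "b = n + t * x" by blast
  moreover have "m + r * x + (n + t * x) = (m + n) + (r + t) * x" by (simp add: algebra_simps)
  ultimately show "a + b \<in> ?K" using left_idealD(2)[OF M] by blast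
next
  fix c a assume "a \<in> ?K"
  then obtain m r where "m \<in> M" "a = m + r * x" by blast
  moreover have "- (m + r * x) = - m + (- r) * x" and "c * (m + r * x) = c * m + (c * r) * x"
    by (simp_all add: algebra_simps)
  ultimately show "- a \<in> ?K" and "c * a \<in> ?K" using left_idealD(3,4)[OF M] by blast+
qed

lemma jacobson_imp_left_invertible:
  assumes "(x::'a::ring_1) \<in> jacobson"
  shows "\<exists>s. s * (1 - r * x) = 1"
proof (rule ccontr)
  assume "\<nexists>s. s * (1 - r * x) = 1"
  then have "1 \<notin> range (\<lambda>s. s * (1 - r * x))" by force
  then obtain M where M: "maximal_left_ideal M" and sub: "range (\<lambda>s. s * (1 - r * x)) \<subseteq> M"
    using exists_maximal_left_ideal left_ideal_range_mult_right by blast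
  then have M_ideal: "left_ideal M" and "1 \<notin> M"
    unfolding maximal_left_ideal_def using left_ideal_one_imp_UNIV by blast+
  have "1 - r * x \<in> M" using sub rangeI[of "\<lambda>s. s * (1 - r * x)" 1] by auto
  moreover have "x \<in> M" using assms M unfolding jacobson_def by blast
  then have "r * x \<in> M" by (rule left_idealD(4)[OF M_ideal])
  ultimately have "(1 - r * x) + r * x \<in> M" by (rule left_idealD(2)[OF M_ideal])
  with \<open>1 \<notin> M\<close> show False by simp
qed

lemma left_invertible_imp_jacobson:
  assumes inv: "\<And>r. \<exists>s. s * (1 - r * x) = 1"
  shows "(x::'a::ring_1) \<in> jacobson"
  unfolding jacobson_def
proof
  fix M :: "'a set" assume "M \<in> {I. maximal_left_ideal I}"
  then have M: "left_ideal M" "1 \<notin> M" "\<And>K. left_ideal K \<Longrightarrow> M \<subseteq> K \<Longrightarrow> K = M \<or> K = UNIV"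
    unfolding maximal_left_ideal_def using left_ideal_one_imp_UNIV by blast+
  show "x \<in> M"
  proof (rule ccontr)
    assume "x \<notin> M"
    define K where "K = {m + r * x | m r. m \<in> M}"
    have "m = m + 0 * x" for m by simp
    then have "M \<subseteq> K" unfolding K_def by blast
    moreover have "x = 0 + 1 * x" by simp
    then have "x \<in> K" using left_idealD(1)[OF M(1)] unfolding K_def by blast
    moreover have "left_ideal K" unfolding K_def by (rule left_ideal_add_left_multiples[OF M(1)])
    ultimately have "K = UNIV" using M(3)[of K] \<open>x \<notin> M\<close> by blast
    then obtain m r where "m \<in> M" and "1 = m + r * x" unfolding K_def by blast
    then have "m = 1 - r * x" by (simp add: eq_diff_eq)
    moreover obtain s where "s * (1 - r * x) = 1" using inv by blast
    ultimately have "1 = s * m" by simp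
    with left_idealD(4)[OF M(1) \<open>m \<in> M\<close>, of s] M(2) show False by simp
  qed
qed

lemma commuting_idempotents_eq_if_diff_in_jacobson:
  fixes e f :: "'a::ring_1"
  assumes e: "e * e = e" and f: "f * f = f" and comm: "e * f = f * e"
    and J: "e - f \<in> jacobson"
  shows "e = f"
proof -
  define w where "w = e - f"
  have ww: "w * w = e + f - 2 * (e * f)"
    unfolding w_def by (simp add: algebra_simps e f comm mult_2)
  have "e * (e * f) = e * f" "f * (e * f) = e * f" "f * (f * e) = f * e" "e * (f * e) = f * e"
    by (metis e f comm mult.assoc)+
  then have www: "w * w * w = w"
    unfolding ww unfolding w_def by (simp add: algebra_simps e f comm mult_2)
  obtain s where s: "s * (1 - w * w) = 1"
    using jacobson_imp_left_invertible J unfolding w_def by blast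
  have "w = s * (1 - w * w) * w" using s by simp
  also have "\<dots> = s * (w - w * w * w)" by (simp add: algebra_simps)
  also have "\<dots> = 0" using www by simp
  finally show ?thesis unfolding w_def by simp
qed

lemma central_in_jacobson_if_square_in_jacobson:
  fixes c :: "'a::ring_1"
  assumes central: "\<And>y. c * y = y * c" and J: "c * c \<in> jacobson"
  shows "c \<in> jacobson"
proof (rule left_invertible_imp_jacobson)
  fix r
  obtain t where t: "t * (1 - (r * r) * (c * c)) = 1"
    using jacobson_imp_left_invertible[OF J] by blast
  have "r * c * (r * c) = (r * r) * (c * c)"
    by (simp add: mult.assoc central[of "r * c"])
  then have "(1 + r * c) * (1 - r * c) = 1 - (r * r) * (c * c)"
    by (simp add: algebra_simps)
  with t have "(t * (1 + r * c)) * (1 - r * c) = 1" by (simp add: mult.assoc)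
  then show "\<exists>s. s * (1 - r * c) = 1" by blast
qed

lemma surj_ring_hom_jacobson:
  fixes \<phi> :: "'a::ring_1 \<Rightarrow> 'b::ring_1"
  assumes mult: "\<And>x y. \<phi> (x * y) = \<phi> x * \<phi> y" and diff: "\<And>x y. \<phi> (x - y) = \<phi> x - \<phi> y"
    and one: "\<phi> 1 = 1" and "surj \<phi>" and x: "x \<in> jacobson"
  shows "\<phi> x \<in> jacobson"
proof (rule left_invertible_imp_jacobson)
  fix r
  obtain r' where r: "r = \<phi> r'" using \<open>surj \<phi>\<close> by (metis surjD)
  obtain s where s: "s * (1 - r' * x) = 1" using jacobson_imp_left_invertible[OF x] by blast
  have "\<phi> s * (1 - r * \<phi> x) = \<phi> (s * (1 - r' * x))" by (simp add: mult diff one r)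
  then have "\<phi> s * (1 - r * \<phi> x) = 1" by (simp add: s one)
  then show "\<exists>s. s * (1 - r * \<phi> x) = 1" by blast
qed

section \<open>Strongly J-*-clean rings\<close>

lemma is_involutionD:
  assumes "is_involution st"
  shows "st 0 = 0" "st 1 = 1" "st (- x) = - st x" "st (x - y) = st x - st y"
    "st (x + y) = st x + st y" "st (x * y) = st y * st x" "st (st x) = x"
proof -
  have add: "\<And>x y. st (x + y) = st x + st y" and mult: "\<And>x y. st (x * y) = st y * st x"
    and invol: "\<And>x. st (st x) = x"
    using assms unfolding is_involution_def by auto
  show zero: "st 0 = 0" using add[of 0 0] by simp
  have "st (st 1 * 1) = st 1 * st (st 1)" by (rule mult)
  then show "st 1 = 1" using invol by simp
  show uminus: "\<And>x. st (- x) = - st x" using add zero by (metis add.right_inverse minus_unique)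
  show "st (x - y) = st x - st y" using add uminus by (metis diff_conv_add_uminus)
  show "st (x + y) = st x + st y" "st (x * y) = st y * st x" "st (st x) = x"
    using add mult invol by auto
qed

lemma strongly_J_star_cleanE:
  assumes "strongly_J_star_clean st"
  obtains e u where "e * e = e" "st e = e" "u \<in> jacobson" "a = e + u" "a * e = e * a"
  using assms unfolding strongly_J_star_clean_def projection_def by blast

lemma strongly_J_star_clean_idempotent_fixed:
  fixes st :: "'a::ring_1 \<Rightarrow> 'a"
  assumes "strongly_J_star_clean st" and f: "f * f = f"
  shows "st f = f"
proof -
  obtain e u where "e * e = e" "st e = e" "u \<in> jacobson" "f = e + u" "f * e = e * f"
    using assms(1) by (rule strongly_J_star_cleanE)
  moreover from \<open>f = e + u\<close> have "f - e = u" by simp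
  ultimately have "f = e" using f commuting_idempotents_eq_if_diff_in_jacobson[of f e] by simp
  with \<open>st e = e\<close> show ?thesis by simp
qed

lemma idempotent_mult_complement_eq_zero:
  fixes st :: "'a::ring_1 \<Rightarrow> 'a" and e x :: 'a
  assumes inv: "is_involution st" and proj: "\<And>f. f * f = f \<Longrightarrow> st f = f" and e: "e * e = e"
  shows "e * x * (1 - e) = 0"
proof -
  define y where "y = e * x * (1 - e)"
  have e_compl: "e * (1 - e) = 0" "(1 - e) * e = 0"
    using e by (simp_all add: right_diff_distrib left_diff_distrib)
  have "e * y = y" unfolding y_def by (simp add: mult.assoc[symmetric] e)
  moreover have "y * e = 0" unfolding y_def by (simp add: mult.assoc e_compl)
  moreover have "y * y = 0"
    unfolding y_def by (simp add: mult.assoc) (simp add: mult.assoc[symmetric] e_compl)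
  ultimately have "(e + y) * (e + y) = e + y" by (simp add: distrib_left distrib_right e)
  then have "e + y = st (e + y)" by (rule proj[symmetric])
  also have "\<dots> = e + (1 - e) * st x * e"
    unfolding y_def using is_involutionD[OF inv] proj[OF e] by (simp add: mult.assoc)
  finally have "e * (e + y) = e * (e + (1 - e) * st x * e)" by simp
  then show ?thesis
    using \<open>e * y = y\<close> by (simp add: distrib_left e mult.assoc[symmetric] e_compl y_def)
qed

lemma idempotent_central_if_idempotents_fixed:
  fixes st :: "'a::ring_1 \<Rightarrow> 'a" and e x :: 'a
  assumes inv: "is_involution st" and proj: "\<And>f. f * f = f \<Longrightarrow> st f = f" and e: "e * e = e"
  shows "e * x = x * e"
proof -
  have "(1 - e) * (1 - e) = 1 - e" using e by (simp add: algebra_simps)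
  from idempotent_mult_complement_eq_zero[OF inv proj this, of x]
  have "x * e = e * x * e" by (simp add: left_diff_distrib)
  moreover from idempotent_mult_complement_eq_zero[OF inv proj e, of x]
  have "e * x = e * x * e" by (simp add: right_diff_distrib)
  ultimately show ?thesis by simp
qed

lemma strongly_J_star_clean_idempotent_central:
  fixes st :: "'a::ring_1 \<Rightarrow> 'a" and e x :: 'a
  assumes "is_involution st" and "strongly_J_star_clean st" and "e * e = e"
  shows "e * x = x * e"
  using idempotent_central_if_idempotents_fixed[OF assms(1)
      strongly_J_star_clean_idempotent_fixed[OF assms(2)] assms(3)] .

lemma strongly_J_star_clean_two_in_jacobson:
  assumes "strongly_J_star_clean (st :: 'a::ring_1 \<Rightarrow> 'a)"
  shows "(2::'a) \<in> jacobson"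
proof -
  obtain e u :: 'a where e: "e * e = e" and u: "u \<in> jacobson" and decomp: "-1 = e + u"
    using strongly_J_star_cleanE[OF assms, of "-1"] by blast
  from decomp have "u = -1 - e" by (simp add: eq_diff_eq add.commute)
  then have eu: "e * u = u * e" by (simp only:) (simp add: algebra_simps)
  have "(-1::'a) - (-1) * (-1) = u - e * u - e * u - u * u"
    unfolding decomp by (simp add: algebra_simps e eu)
  moreover have "u - e * u - e * u - u * u \<in> jacobson"
    using u jacobson_diff jacobson_mult_left by blast
  ultimately have "- 2 \<in> (jacobson :: 'a set)" by simp
  then show ?thesis using jacobson_uminus by fastforce
qed

section \<open>The ring \<open>R[i]\<close>\<close>

lemma GI_arith:
  fixes a b c d :: "'a::ring_1"
  shows "GI a b + GI c d = GI (a + c) (b + d)"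
    and "GI a b - GI c d = GI (a - c) (b - d)"
    and "- GI a b = GI (- a) (- b)"
    and "GI a b * GI c d = GI (a * c - b * d) (a * d + b * c)"
    and "(0::'a gi) = GI 0 0"
    and "(1::'a gi) = GI 1 0"
  by (simp_all add: plus_gi_def minus_gi_def uminus_gi_def times_gi_def zero_gi_def one_gi_def)

lemma gi_star_GI: "gi_star st (GI a b) = GI (st a) (st b)"
  by (simp add: gi_star_def)

lemma is_involution_gi_star:
  fixes st :: "'a::ring_1 \<Rightarrow> 'a"
  assumes "is_involution st"
  shows "is_involution (gi_star st)"
  unfolding is_involution_def
proof (intro conjI allI)
  fix x y :: "'a gi"
  obtain a b c d where xy: "x = GI a b" "y = GI c d" by (cases x, cases y)
  show "gi_star st (x + y) = gi_star st x + gi_star st y"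
    and "gi_star st (x * y) = gi_star st y * gi_star st x"
    and "gi_star st (gi_star st x) = x"
    unfolding xy by (simp_all add: GI_arith gi_star_GI is_involutionD[OF assms] add.commute)
qed

text \<open>With \<open>s (1 - \<alpha>) = 1\<close> and \<open>\<gamma> = s \<beta>\<close>, left multiplication by \<open>s\<close> turns
  \<open>1 - (\<alpha> + \<beta> i)\<close> into \<open>1 - \<gamma> i\<close>, and \<open>(1 + \<gamma> i)(1 - \<gamma> i) = 1 + \<gamma>\<^sup>2\<close> is left invertible
  because \<open>\<gamma> \<in> J\<close>.\<close>

lemma GI_one_minus_left_invertible:
  fixes \<alpha> \<beta> :: "'a::ring_1"
  assumes \<alpha>: "\<alpha> \<in> jacobson" and \<beta>: "\<beta> \<in> jacobson"
  shows "\<exists>w. w * (1 - GI \<alpha> \<beta>) = 1"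
proof -
  obtain s where s: "s * (1 - 1 * \<alpha>) = 1" using jacobson_imp_left_invertible[OF \<alpha>] by blast
  define \<gamma> where "\<gamma> = s * \<beta>"
  have "\<gamma> \<in> jacobson" unfolding \<gamma>_def using jacobson_mult_left[OF \<beta>] .
  then obtain t where t: "t * (1 - (- \<gamma>) * \<gamma>) = 1" using jacobson_imp_left_invertible by blast
  have 1: "GI s 0 * (1 - GI \<alpha> \<beta>) = GI 1 (- \<gamma>)"
    using s by (simp add: GI_arith \<gamma>_def)
  have 2: "GI 1 \<gamma> * GI 1 (- \<gamma>) = GI (1 + \<gamma> * \<gamma>) 0"
    by (simp add: GI_arith)
  have 3: "GI t 0 * GI (1 + \<gamma> * \<gamma>) 0 = 1"
    using t by (simp add: GI_arith)
  have "(GI t 0 * GI 1 \<gamma> * GI s 0) * (1 - GI \<alpha> \<beta>) = 1"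
    by (simp only: mult.assoc 1) (simp only: mult.assoc[symmetric] 2 3)
  then show ?thesis by blast
qed

lemma GI_in_jacobson:
  fixes \<alpha> \<beta> :: "'a::ring_1"
  assumes \<alpha>: "\<alpha> \<in> jacobson" and \<beta>: "\<beta> \<in> jacobson"
  shows "GI \<alpha> \<beta> \<in> jacobson"
proof (rule left_invertible_imp_jacobson)
  fix r :: "'a gi"
  obtain s t where r: "r = GI s t" by (cases r)
  have "r * GI \<alpha> \<beta> = GI (s * \<alpha> - t * \<beta>) (s * \<beta> + t * \<alpha>)" unfolding r by (simp add: GI_arith)
  moreover have "s * \<alpha> - t * \<beta> \<in> jacobson"
    using jacobson_diff[OF jacobson_mult_left[OF \<alpha>] jacobson_mult_left[OF \<beta>]] .
  moreover have "s * \<beta> + t * \<alpha> \<in> jacobson"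
    using jacobson_add[OF jacobson_mult_left[OF \<beta>] jacobson_mult_left[OF \<alpha>]] .
  ultimately show "\<exists>w. w * (1 - r * GI \<alpha> \<beta>) = 1"
    using GI_one_minus_left_invertible[of "s * \<alpha> - t * \<beta>" "s * \<beta> + t * \<alpha>"] by simp
qed

lemma GI_real_in_jacobson_iff: "GI x 0 \<in> jacobson \<longleftrightarrow> (x::'a::ring_1) \<in> jacobson"
proof
  assume x: "GI x 0 \<in> jacobson"
  show "x \<in> jacobson"
  proof (rule left_invertible_imp_jacobson)
    fix r
    obtain w where w: "w * (1 - GI r 0 * GI x 0) = 1"
      using jacobson_imp_left_invertible[OF x] by blast
    obtain s t where "w = GI s t" by (cases w)
    with w have "s * (1 - r * x) = 1" by (simp add: GI_arith)
    then show "\<exists>s. s * (1 - r * x) = 1" by blast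
  qed
next
  assume "x \<in> jacobson"
  then show "GI x 0 \<in> jacobson" using GI_in_jacobson zero_in_jacobson by blast
qed

definition gi_cnj :: "'a::ring_1 gi \<Rightarrow> 'a gi" where
  "gi_cnj x = GI (re x) (- im x)"

lemma gi_cnj_GI [simp]: "gi_cnj (GI a b) = GI a (- b)"
  by (simp add: gi_cnj_def)

lemma gi_cnj_hom:
  fixes x y :: "'a::ring_1 gi"
  shows "gi_cnj (x + y) = gi_cnj x + gi_cnj y"
    and "gi_cnj (x - y) = gi_cnj x - gi_cnj y"
    and "gi_cnj (x * y) = gi_cnj x * gi_cnj y"
    and "gi_cnj 1 = 1"
    and "gi_cnj (gi_cnj x) = x"
  by (cases x, cases y, simp add: GI_arith)+

lemma gi_cnj_jacobson:
  assumes "(x::'a::ring_1 gi) \<in> jacobson"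
  shows "gi_cnj x \<in> jacobson"
proof (rule surj_ring_hom_jacobson[OF gi_cnj_hom(3,2,4) _ assms])
  show "surj gi_cnj" using gi_cnj_hom(5) by (rule surjI)
qed

lemma gi_i_minus_one_in_jacobson:
  assumes two: "(2::'a::ring_1) \<in> jacobson"
  shows "gi_i - 1 \<in> (jacobson :: 'a gi set)"
proof (rule central_in_jacobson_if_square_in_jacobson)
  fix y :: "'a gi"
  obtain s t where "y = GI s t" by (cases y)
  then show "(gi_i - 1) * y = y * (gi_i - 1)" by (simp add: gi_i_def GI_arith)
next
  have "(gi_i - 1) * (gi_i - 1) = GI 0 (- 2 :: 'a)" by (simp add: gi_i_def GI_arith)
  then show "(gi_i - 1) * (gi_i - 1) \<in> (jacobson :: 'a gi set)"
    using GI_in_jacobson[OF zero_in_jacobson jacobson_uminus[OF two]] by simp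
qed

lemma gi_central_idempotent_im_eq_zero:
  fixes e :: "'a::ring_1 gi"
  assumes e: "e * e = e" and central: "\<And>y. e * y = y * e" and cnj: "gi_cnj e = e"
  shows "im e = 0"
proof -
  obtain p q where e_GI: "e = GI p q" by (cases e)
  have "- q = q" using cnj unfolding e_GI by simp
  then have "q + q = 0" by (metis add.right_inverse)
  have "p * q = q * p" using central[of "GI q 0"] unfolding e_GI by (simp add: GI_arith)
  moreover have "p * q + q * p = q" using e unfolding e_GI by (simp add: GI_arith)
  ultimately have "q = p * (q + q)" by (simp add: distrib_left)
  with \<open>q + q = 0\<close> show ?thesis unfolding e_GI by simp
qed

section \<open>Transfer of strong J-*-cleanness between \<open>R\<close> and \<open>R[i]\<close>\<close>

lemma strongly_J_star_clean_of_gi: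
  fixes st :: "'a::ring_1 \<Rightarrow> 'a"
  assumes inv: "is_involution st" and clean: "strongly_J_star_clean (gi_star st)"
  shows "strongly_J_star_clean st"
  unfolding strongly_J_star_clean_def projection_def
proof
  fix a :: 'a
  obtain e u :: "'a gi" where e: "e * e = e" "gi_star st e = e" and u: "u \<in> jacobson"
    and decomp: "GI a 0 = e + u" and comm: "GI a 0 * e = e * GI a 0"
    using strongly_J_star_cleanE[OF clean, of "GI a 0"] by blast
  have central: "\<And>y. e * y = y * e"
    using strongly_J_star_clean_idempotent_central[OF is_involution_gi_star[OF inv] clean e(1)] .
  have "gi_cnj e + gi_cnj u = gi_cnj (e + u)" by (simp add: gi_cnj_hom)
  also have "\<dots> = e + u" unfolding decomp[symmetric] by simp
  finally have "e - gi_cnj e = gi_cnj u - u" by (simp add: algebra_simps)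
  moreover have "gi_cnj u - u \<in> jacobson" using jacobson_diff[OF gi_cnj_jacobson[OF u] u] .
  moreover have "gi_cnj e * gi_cnj e = gi_cnj e" by (simp add: gi_cnj_hom(3)[symmetric] e(1))
  ultimately have "e = gi_cnj e"
    using commuting_idempotents_eq_if_diff_in_jacobson[OF e(1) _ central, of "gi_cnj e"] by argo
  then have "im e = 0" using gi_central_idempotent_im_eq_zero[OF e(1) central] by argo
  then obtain p where e_GI: "e = GI p 0" by (metis gi.collapse)
  have "p * p = p" "st p = p" "a * p = p * a"
    using e comm unfolding e_GI by (simp_all add: GI_arith gi_star_GI)
  moreover from decomp have "u = GI a 0 - e" by simp
  then have "GI (a - p) 0 = u" unfolding e_GI by (simp add: GI_arith)
  then have "a - p \<in> jacobson" using u GI_real_in_jacobson_iff by blast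
  ultimately show "\<exists>e u. (e * e = e \<and> st e = e) \<and> u \<in> jacobson \<and> a = e + u \<and> a * e = e * a"
    by (intro exI[of _ p] exI[of _ "a - p"]) simp
qed

lemma strongly_J_star_clean_gi:
  fixes st :: "'a::ring_1 \<Rightarrow> 'a"
  assumes inv: "is_involution st" and clean: "strongly_J_star_clean st"
  shows "strongly_J_star_clean (gi_star st)"
  unfolding strongly_J_star_clean_def projection_def
proof
  fix x :: "'a gi"
  obtain a b where x: "x = GI a b" by (cases x)
  obtain e u :: 'a where e: "e * e = e" "st e = e" and u: "u \<in> jacobson"
    and decomp: "a + b = e + u"
    using strongly_J_star_cleanE[OF clean, of "a + b"] by blast
  have central: "\<And>y. e * y = y * e"
    using strongly_J_star_clean_idempotent_central[OF inv clean e(1)] .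
  define v where "v = GI u 0 + GI b 0 * (gi_i - 1)"
  have "a - e = u - b" using decomp by (simp add: algebra_simps)
  then have "x = GI e 0 + v" unfolding x v_def by (simp add: GI_arith gi_i_def algebra_simps)
  moreover have "GI u 0 \<in> jacobson" using u by (simp add: GI_real_in_jacobson_iff)
  then have "v \<in> jacobson"
    unfolding v_def using jacobson_add jacobson_mult_left
      gi_i_minus_one_in_jacobson[OF strongly_J_star_clean_two_in_jacobson[OF clean]] by blast
  moreover have "GI e 0 * GI e 0 = GI e 0" using e(1) by (simp add: GI_arith)
  moreover have "gi_star st (GI e 0) = GI e 0"
    using e(2) by (simp add: gi_star_GI is_involutionD[OF inv])
  moreover have "x * GI e 0 = GI e 0 * x" unfolding x by (simp add: GI_arith central)
  ultimately show "\<exists>E U. (E * E = E \<and> gi_star st E = E) \<and> U \<in> jacobson \<and> x = E + U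
      \<and> x * E = E * x"
    by blast
qed

theorem proposition4p2:
  fixes st :: "'a::ring_1 \<Rightarrow> 'a"
  assumes "is_involution st"
  shows "strongly_J_star_clean (gi_star st) \<longleftrightarrow> strongly_J_star_clean st"
  using strongly_J_star_clean_of_gi[OF assms] strongly_J_star_clean_gi[OF assms] by blast

end
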